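(* In the discrete-covariate setting below, assume Assumptions T and W. Fix $C_0\ge 1$ and let $\tilde\beta_j^l(\mathbf z)$ be a minimizer of $$\sum_{k=1}^n \mathrm w_l(\mathbf z_k)\,(\beta_j^*(\mathbf z_k)-\beta)^{\mathrm T}\,\Sigma^*_{-j,-j}(\mathbf z_k)\,(\beta_j^*(\mathbf z_k)-\beta)$$ over $\{\beta\in\mathbb R^{p-1}:\|\beta\|_0\le C_0s_j^*\}$. Then there is a constant $c>0$ such that for $j=1,\dots,p$ and every subject $l$ (with $n>n_l$), $$\|\tilde\beta_j^l(\mathbf z)-\beta_j^*(\mathbf z_l)\|_2^2\le c\,\exp\!\big(-2\delta_l^2/\tau^2+2\log(n/n_l-1)\big)\,s_j^*.$$
   Context: Discrete-covariate setting. There are $n$ subjects with covariates $\mathbf z_i$ taking $K$ distinct values (levels); $n_l$ denotes the number of subjects sharing the covariate value $\mathbf z_l$ of subject $l$. $\mathbf X\in\mathbb R^{n\times p}$ has rows $\mathbf x_i$; given the covariates, the $\mathbf x_i$ are independent with $\mathbf x_i\sim\mathcal N_p(0,\Omega^*(\mathbf z_i)^{-1})$; $\Sigma^*(\mathrm z)=\Omega^*(\mathrm z)^{-1}$, $\Sigma^*_{-j,-j}$ is it with row/column $j$ removed; $\beta_j^*(\mathrm z)\in\mathbb R^{p-1}$ is the true regression coefficient of variable $j$ on the others ($\beta^*_{jk}=-\Omega^*_{kj}/\Omega^*_{jj}$), with conditional variance $\sigma_*^2$ known. Weights: $\mathrm w_l(\mathbf z_k)=c_lK((\mathbf z_k-\mathbf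 z_l)/\tau)/\tau$, $c_l>0$ constant. $\tilde\beta^l_j$ as defined is the constrained Kullback–Leibler minimizer of the weighted pseudo-likelihood. $\delta_l=\min_{k:\mathbf z_k\ne\mathbf z_l}|\mathbf z_k-\mathbf z_l|$. Assumption T: for each covariate value $\mathrm z$, $\Omega^*(\mathrm z)$ has eigenvalues bounded away from $0$ and $\infty$, and $\|\beta_j^*(\mathrm z)\|_0\le s_j^*$; $s^*=\max_js_j^*$. Assumption W: $\delta_l$ is bounded below by a positive constant for all levels; the kernel is Gaussian, $K(x)\propto e^{-x^2}$; and $\tau=c\min_l\delta_l/\sqrt{\log n}$ for some constant $c\in(0,1)$. *)

theory Defs
  imports Complex_Main "Jordan_Normal_Form.Char_Poly"
begin

text \<open>Vectors of R^{p-1} (regression of variable j on the others) are encoded as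
  functions nat => real supported on {i. i < p, i \<noteq> j}.\<close>

definition in_Rpm1 :: "nat \<Rightarrow> nat \<Rightarrow> (nat \<Rightarrow> real) \<Rightarrow> bool" where
  "in_Rpm1 p j b \<longleftrightarrow> b j = 0 \<and> (\<forall>i\<ge>p. b i = 0)"

definition l0 :: "nat \<Rightarrow> nat \<Rightarrow> (nat \<Rightarrow> real) \<Rightarrow> nat" where
  "l0 p j b = card {i. i < p \<and> i \<noteq> j \<and> b i \<noteq> 0}"

definition sqnorm :: "nat \<Rightarrow> nat \<Rightarrow> (nat \<Rightarrow> real) \<Rightarrow> real" where
  "sqnorm p j b = (\<Sum>i\<in>{i. i < p \<and> i \<noteq> j}. (b i)\<^sup>2)"

definition beta_star :: "nat \<Rightarrow> nat \<Rightarrow> real mat \<Rightarrow> (nat \<Rightarrow> real)" where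
  "beta_star p j Om = (\<lambda>k. if k < p \<and> k \<noteq> j then - (Om $$ (k, j)) / (Om $$ (j, j)) else 0)"

definition quad_mj :: "nat \<Rightarrow> nat \<Rightarrow> real mat \<Rightarrow> (nat \<Rightarrow> real) \<Rightarrow> real" where
  "quad_mj p j S d = (\<Sum>a\<in>{i. i < p \<and> i \<noteq> j}. \<Sum>b\<in>{i. i < p \<and> i \<noteq> j}. d a * S $$ (a, b) * d b)"

text \<open>Gaussian kernel weights  w_l(z_k) = c_l K((z_k - z_l)/tau)/tau,  K(x) \<propto> exp(-x^2)
  (the proportionality constant of K is absorbed into c_l)\<close>
definition wgt :: "(nat \<Rightarrow> real) \<Rightarrow> (nat \<Rightarrow> real) \<Rightarrow> real \<Rightarrow> nat \<Rightarrow> nat \<Rightarrow> real" where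
  "wgt cw z tau l k = cw l * exp (- (((z k - z l) / tau)\<^sup>2)) / tau"

definition obj :: "nat \<Rightarrow> nat \<Rightarrow> (nat \<Rightarrow> real) \<Rightarrow> (real \<Rightarrow> real mat) \<Rightarrow> (real \<Rightarrow> real mat)
    \<Rightarrow> (nat \<Rightarrow> real) \<Rightarrow> real \<Rightarrow> nat \<Rightarrow> nat \<Rightarrow> (nat \<Rightarrow> real) \<Rightarrow> real" where
  "obj n p z Om Sig cw tau j l b =
     (\<Sum>k<n. wgt cw z tau l k *
        quad_mj p j (Sig (z k)) (\<lambda>i. beta_star p j (Om (z k)) i - b i))"

definition nlev :: "nat \<Rightarrow> (nat \<Rightarrow> real) \<Rightarrow> nat \<Rightarrow> nat" where
  "nlev n z l = card {k. k < n \<and> z k = z l}"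

definition delta :: "nat \<Rightarrow> (nat \<Rightarrow> real) \<Rightarrow> nat \<Rightarrow> real" where
  "delta n z l = Min {\<bar>z k - z l\<bar> | k. k < n \<and> z k \<noteq> z l}"

end

theory Submission
  imports Defs "HOL-Analysis.Function_Topology"
begin

text \<open>
  Let \<open>d\<close> be the error of the minimizer against \<open>\<beta>*(z_l)\<close> and
  \<open>e_k = \<beta>*(z_k) - \<beta>*(z_l)\<close> the residuals of \<open>\<beta>*(z_l)\<close>, which vanish at the level of
  \<open>z_l\<close>. Since \<open>\<beta>*(z_l)\<close> is feasible, comparing objective values and expanding the squares
  gives \<open>\<Sum>_k w_k d\<^sup>T \<Sigma>_k d \<le> 2 \<Sum>_k w_k e_k\<^sup>T \<Sigma>_k d\<close>. The left side is at least
  \<open>n_l w_l |d|\<^sup>2 / \<lambda>_max\<close>. On the right, Young's inequality with \<open>\<Sigma> \<le> 1/\<lambda>_min\<close> and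
  \<open>|\<beta>*| \<le> \<lambda>_max/\<lambda>_min\<close> bounds each cross term, and the Gaussian kernel makes every weight
  off the level at most \<open>w_l exp(-\<delta>_l\<^sup>2/\<tau>\<^sup>2)\<close>. Optimizing Young's parameter yields
  \<open>|d|\<^sup>2 \<le> 16 (\<lambda>_max/\<lambda>_min)^4 ((n - n_l)/n_l)\<^sup>2 exp(-2\<delta>_l\<^sup>2/\<tau>\<^sup>2)\<close>.
  The sparsity constraint only makes \<open>\<beta>*(z_l)\<close> feasible; the factor \<open>s_j\<close> matters only
  when \<open>s_j = 0\<close>, where both vectors vanish.
  The spectral bounds for \<open>\<Sigma> = \<Omega>\<^sup>-\<^sup>1\<close> come from the Rayleigh quotient, whose minimum over
  the unit sphere is attained at an eigenvector.
\<close>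

section \<open>Quadratic forms of matrices indexed below \<open>p\<close>\<close>

definition bform :: "nat \<Rightarrow> (nat \<Rightarrow> nat \<Rightarrow> real) \<Rightarrow> (nat \<Rightarrow> real) \<Rightarrow> (nat \<Rightarrow> real) \<Rightarrow> real"
  where "bform p M u v = (\<Sum>a<p. \<Sum>b<p. u a * M a b * v b)"

definition sumsq :: "nat \<Rightarrow> (nat \<Rightarrow> real) \<Rightarrow> real"
  where "sumsq p x = (\<Sum>a<p. (x a)\<^sup>2)"

definition mvec :: "nat \<Rightarrow> (nat \<Rightarrow> nat \<Rightarrow> real) \<Rightarrow> (nat \<Rightarrow> real) \<Rightarrow> nat \<Rightarrow> real"
  where "mvec p M x a = (\<Sum>b<p. M a b * x b)"

definition is_eigen :: "nat \<Rightarrow> (nat \<Rightarrow> nat \<Rightarrow> real) \<Rightarrow> real \<Rightarrow> bool"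
  where "is_eigen p M lam \<longleftrightarrow> (\<exists>x. (\<exists>a<p. x a \<noteq> 0) \<and> (\<forall>a<p. mvec p M x a = lam * x a))"

lemma sumsq_nonneg: "0 \<le> sumsq p x"
  unfolding sumsq_def by (simp add: sum_nonneg)

lemma sumsq_eq_0_iff: "sumsq p x = 0 \<longleftrightarrow> (\<forall>a<p. x a = 0)"
  unfolding sumsq_def by (auto simp: sum_nonneg_eq_0_iff)

lemma sumsq_cong: "(\<And>i. i < p \<Longrightarrow> u i = u' i) \<Longrightarrow> sumsq p u = sumsq p u'"
  unfolding sumsq_def by (intro sum.cong) auto

lemma sumsq_scale: "sumsq p (\<lambda>i. t * u i) = t\<^sup>2 * sumsq p u"
  unfolding sumsq_def by (simp add: sum_distrib_left power_mult_distrib)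

lemma sumsq_diff_le: "sumsq p (\<lambda>i. u i - v i) \<le> 2 * sumsq p u + 2 * sumsq p v"
proof -
  have "(u i - v i)\<^sup>2 \<le> 2 * (u i)\<^sup>2 + 2 * (v i)\<^sup>2" for i
    using sum_squares_ge_zero[of "u i + v i" 0] by (simp add: power2_eq_square algebra_simps)
  then have "sumsq p (\<lambda>i. u i - v i) \<le> (\<Sum>a<p. 2 * (u a)\<^sup>2 + 2 * (v a)\<^sup>2)"
    unfolding sumsq_def by (intro sum_mono) auto
  then show ?thesis
    unfolding sumsq_def by (simp add: sum.distrib sum_distrib_left)
qed

lemma bform_cong:
  "(\<And>i. i < p \<Longrightarrow> u i = u' i) \<Longrightarrow> (\<And>i. i < p \<Longrightarrow> v i = v' i) \<Longrightarrow> bform p M u v = bform p M u' v'"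
  unfolding bform_def by (intro sum.cong) auto

lemma bform_zero_left: "(\<And>i. i < p \<Longrightarrow> u i = 0) \<Longrightarrow> bform p M u v = 0"
  unfolding bform_def by simp

lemma mvec_unit: "j < p \<Longrightarrow> mvec p M (\<lambda>i. of_bool (i = j)) a = M a j"
  by (simp add: mvec_def)

lemma sumsq_unit: "j < p \<Longrightarrow> sumsq p (\<lambda>i. of_bool (i = j)) = 1"
  by (simp add: sumsq_def power2_eq_square)

lemma bform_mvec: "bform p M u v = (\<Sum>a<p. u a * mvec p M v a)"
  unfolding bform_def mvec_def by (simp add: sum_distrib_left mult.assoc)

lemma bform_unit: "j < p \<Longrightarrow> bform p M (\<lambda>i. of_bool (i = j)) (\<lambda>i. of_bool (i = j)) = M j j"
  by (simp add: bform_mvec mvec_unit)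

lemma bform_commute:
  assumes "\<forall>a<p. \<forall>b<p. M a b = M b a"
  shows "bform p M u v = bform p M v u"
  unfolding bform_def
  by (subst sum.swap) (use assms in \<open>auto intro!: sum.cong simp: algebra_simps\<close>)

lemma bform_diff_left: "bform p M (\<lambda>i. u i - v i) w = bform p M u w - bform p M v w"
  unfolding bform_def by (simp add: algebra_simps sum_subtractf)

lemma bform_diff_right: "bform p M w (\<lambda>i. u i - v i) = bform p M w u - bform p M w v"
  unfolding bform_def by (simp add: algebra_simps sum_subtractf)

lemma bform_scale_left: "bform p M (\<lambda>i. t * u i) w = t * bform p M u w"
  unfolding bform_def by (simp add: algebra_simps sum_distrib_left)

lemma bform_scale_right: "bform p M w (\<lambda>i. t * u i) = t * bform p M w u"
  unfolding bform_def by (simp add: algebra_simps sum_distrib_left)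

lemma bform_uminus_matrix: "bform p (\<lambda>a b. - M a b) u v = - bform p M u v"
  unfolding bform_def by (simp add: sum_negf)

lemma bform_diff_scaled:
  assumes "bform p M v u = bform p M u v"
  shows "bform p M (\<lambda>i. u i - t * v i) (\<lambda>i. u i - t * v i)
           = bform p M u u - 2 * t * bform p M u v + t\<^sup>2 * bform p M v v"
  using assms
  by (simp add: bform_diff_left bform_diff_right bform_scale_left bform_scale_right
      power2_eq_square algebra_simps)

lemma continuous_on_bform_diag: "continuous_on UNIV (\<lambda>x. bform p M x x)"
  unfolding bform_def by (intro continuous_intros continuous_on_product_coordinates)

lemma continuous_on_sumsq: "continuous_on UNIV (sumsq p)"
  unfolding sumsq_def by (intro continuous_intros continuous_on_product_coordinates)

lemma compact_unit_sphere_fun: "compact {x. sumsq p x = 1 \<and> (\<forall>i\<ge>p. x i = 0)}"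
  (is "compact ?K")
proof -
  define S where "S = (\<lambda>i::nat. if i < p then {-1..1::real} else {0})"
  have "compactin (product_topology (\<lambda>i. euclidean) UNIV) (PiE UNIV S)"
    unfolding compactin_PiE S_def by auto
  then have box: "compact (PiE UNIV S)"
    by (simp add: euclidean_product_topology compactin_euclidean_iff)
  have "?K = {x. sumsq p x = 1} \<inter> (\<Inter>i\<in>{p..}. {x. x i = 0})"
    by auto
  moreover have "closed {x. sumsq p x = 1}"
    using closed_Collect_eq[OF continuous_on_sumsq continuous_on_const] by simp
  moreover have "closed {x::nat\<Rightarrow>real. x i = 0}" for i
    by (rule closed_Collect_eq[OF continuous_on_product_coordinates continuous_on_const])
  ultimately have closed: "closed ?K"
    by (simp add: closed_Int closed_INT)
  have "?K \<subseteq> PiE UNIV S"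
  proof
    fix x assume x: "x \<in> ?K"
    have "\<bar>x i\<bar> \<le> 1" if "i < p" for i
      using x that member_le_sum[of i "{..<p}" "\<lambda>a. (x a)\<^sup>2"] abs_le_square_iff[of "x i" 1]
      by (simp add: sumsq_def)
    then show "x \<in> PiE UNIV S"
      using x unfolding S_def PiE_def by (auto simp: abs_le_iff)
  qed
  then have "?K = PiE UNIV S \<inter> ?K" by blast
  with compact_Int_closed[OF box closed] show ?thesis by simp
qed

section \<open>Rayleigh quotient\<close>

lemma rayleigh_min_attained:
  assumes "0 < p"
  obtains x0 where "sumsq p x0 = 1" "\<And>y. bform p M x0 x0 * sumsq p y \<le> bform p M y y"
proof -
  let ?K = "{x. sumsq p x = 1 \<and> (\<forall>i\<ge>p. x i = 0)}"
  have "(\<lambda>i. of_bool (i = 0)) \<in> ?K"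
    using assms by (simp add: sumsq_unit)
  then have ne: "?K \<noteq> {}" by blast
  have "continuous_on ?K (\<lambda>x. bform p M x x)"
    using continuous_on_bform_diag by (rule continuous_on_subset) simp
  from continuous_attains_inf[OF compact_unit_sphere_fun ne this]
  obtain x0 where x0: "x0 \<in> ?K" and min: "\<And>y. y \<in> ?K \<Longrightarrow> bform p M x0 x0 \<le> bform p M y y"
    by blast
  have "bform p M x0 x0 * sumsq p y \<le> bform p M y y" for y
  proof (cases "sumsq p y = 0")
    case True
    then have "bform p M y y = 0"
      by (intro bform_zero_left) (simp add: sumsq_eq_0_iff)
    with True show ?thesis by simp
  next
    case False
    define r where "r = sqrt (sumsq p y)"
    have r: "0 < r" "r\<^sup>2 = sumsq p y"
      using False sumsq_nonneg[of p y] by (auto simp: r_def)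
    define y' where "y' i = (if i < p then (1 / r) * y i else 0)" for i
    have "sumsq p y' = sumsq p (\<lambda>i. (1 / r) * y i)"
      by (rule sumsq_cong) (simp add: y'_def)
    also have "\<dots> = (1 / r)\<^sup>2 * sumsq p y"
      by (rule sumsq_scale)
    also have "\<dots> = 1"
      using r False by (simp add: power_divide)
    finally have "y' \<in> ?K"
      by (simp add: y'_def)
    then have "bform p M x0 x0 \<le> bform p M y' y'" by (rule min)
    also have "bform p M y' y' = bform p M (\<lambda>i. (1 / r) * y i) (\<lambda>i. (1 / r) * y i)"
      by (rule bform_cong) (simp_all add: y'_def)
    also have "\<dots> = bform p M y y / r\<^sup>2"
      unfolding bform_scale_left bform_scale_right by (simp add: power2_eq_square)
    finally show ?thesis
      using r False sumsq_nonneg[of p y] by (simp add: pos_le_divide_eq)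
  qed
  with x0 that show thesis by blast
qed

lemma rayleigh_minimizer_eigen:
  assumes sym: "\<forall>a<p. \<forall>b<p. M a b = M b a"
    and min: "\<And>y. m * sumsq p y \<le> bform p M y y"
    and x0: "bform p M x0 x0 = m * sumsq p x0"
  shows "\<forall>a<p. mvec p M x0 a = m * x0 a"
proof -
  define g where "g y = bform p M y y - m * sumsq p y" for y
  define r where "r a = mvec p M x0 a - m * x0 a" for a
  have g_nonneg: "0 \<le> g y" for y
    using min[of y] by (simp add: g_def)
  text \<open>\<open>g \<ge> 0\<close> vanishes at \<open>x0\<close>, and moving \<open>x0\<close> a little along the residual \<open>r\<close>
    would make it negative unless \<open>r = 0\<close>.\<close>
  have "g (\<lambda>i. x0 i - t * r i) = - 2 * t * sumsq p r + t\<^sup>2 * g r" for t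
  proof -
    let ?c = "\<Sum>a<p. r a * x0 a"
    have sq: "sumsq p (\<lambda>i. x0 i - t * r i) = sumsq p x0 - 2 * t * ?c + t\<^sup>2 * sumsq p r"
      unfolding sumsq_def
      by (simp add: power2_eq_square algebra_simps sum.distrib sum_subtractf sum_distrib_left)
    have "g (\<lambda>i. x0 i - t * r i)
        = g x0 - 2 * t * (bform p M x0 r - m * ?c) + t\<^sup>2 * g r"
      unfolding g_def sq bform_diff_scaled[OF bform_commute[OF sym]] by (simp add: algebra_simps)
    moreover have "bform p M x0 r - m * ?c = sumsq p r"
      by (subst bform_commute[OF sym]) (simp add: bform_mvec sumsq_def r_def sum_distrib_left
          sum_subtractf[symmetric] power2_eq_square algebra_simps)
    ultimately show ?thesis
      using x0 by (simp add: g_def)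
  qed
  then have descent: "2 * t * sumsq p r \<le> t\<^sup>2 * g r" for t
    using g_nonneg[of "\<lambda>i. x0 i - t * r i"] by simp
  have "sumsq p r = 0"
  proof (rule ccontr)
    assume "sumsq p r \<noteq> 0"
    then have pos: "0 < sumsq p r" using sumsq_nonneg[of p r] by simp
    define t where "t = sumsq p r / (g r + 1)"
    have t: "0 < t" "t * g r < sumsq p r"
      using pos g_nonneg[of r] by (auto simp: t_def field_simps)
    with descent[of t] have "2 * sumsq p r \<le> t * g r"
      by (simp add: power2_eq_square)
    with t pos show False by simp
  qed
  then show ?thesis by (simp add: sumsq_eq_0_iff r_def)
qed

lemma rayleigh_lower:
  assumes sym: "\<forall>a<p. \<forall>b<p. M a b = M b a"
    and ev: "\<And>lam. is_eigen p M lam \<Longrightarrow> lo \<le> lam"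
  shows "lo * sumsq p x \<le> bform p M x x"
proof (cases "p = 0")
  case True
  then show ?thesis by (simp add: sumsq_def bform_def)
next
  case False
  then obtain x0 where x0: "sumsq p x0 = 1" and min: "\<And>y. bform p M x0 x0 * sumsq p y \<le> bform p M y y"
    using rayleigh_min_attained by blast
  have "\<exists>a<p. x0 a \<noteq> 0"
    using x0 sumsq_eq_0_iff[of p x0] by auto
  moreover have "\<forall>a<p. mvec p M x0 a = bform p M x0 x0 * x0 a"
    using rayleigh_minimizer_eigen[OF sym min] x0 by simp
  ultimately have "lo \<le> bform p M x0 x0"
    by (intro ev) (auto simp: is_eigen_def)
  then show ?thesis
    using min[of x] sumsq_nonneg[of p x] by (meson mult_right_mono order_trans)
qed

lemma rayleigh_upper:
  assumes sym: "\<forall>a<p. \<forall>b<p. M a b = M b a"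
    and ev: "\<And>lam. is_eigen p M lam \<Longrightarrow> lam \<le> hi"
  shows "bform p M x x \<le> hi * sumsq p x"
proof -
  have "is_eigen p M (- lam)" if "is_eigen p (\<lambda>a b. - M a b) lam" for lam
  proof -
    from that obtain x where "\<exists>a<p. x a \<noteq> 0" "\<forall>a<p. mvec p (\<lambda>a b. - M a b) x a = lam * x a"
      by (auto simp: is_eigen_def)
    then show ?thesis
      unfolding is_eigen_def mvec_def by (intro exI[of _ x]) (simp add: sum_negf minus_equation_iff)
  qed
  then have "- hi * sumsq p x \<le> bform p (\<lambda>a b. - M a b) x x"
    using sym ev by (intro rayleigh_lower) force+
  then show ?thesis by (simp add: bform_uminus_matrix)
qed

lemma bform_cauchy_schwarz:
  assumes sym: "bform p M v u = bform p M u v" and psd: "\<And>y. 0 \<le> bform p M y y"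
  shows "(bform p M u v)\<^sup>2 \<le> bform p M u u * bform p M v v"
proof -
  let ?B = "bform p M u v"
  have quad: "0 \<le> bform p M u u - 2 * t * ?B + t\<^sup>2 * bform p M v v" for t
    using psd[of "\<lambda>i. u i - t * v i"] by (simp add: bform_diff_scaled[OF sym])
  show ?thesis
  proof (cases "bform p M v v = 0")
    case True
    have "?B = 0"
    proof (rule ccontr)
      assume "?B \<noteq> 0"
      with quad[of "(bform p M u u + 1) / (2 * ?B)"] True show False
        by (simp add: field_simps)
    qed
    with True show ?thesis by simp
  next
    case False
    with psd[of v] have pos: "0 < bform p M v v" by simp
    have "0 \<le> bform p M u u - 2 * (?B / bform p M v v) * ?B + (?B / bform p M v v)\<^sup>2 * bform p M v v"
      by (rule quad)
    also have "\<dots> = bform p M u u - ?B\<^sup>2 / bform p M v v"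
      using pos by (simp add: field_simps power2_eq_square)
    finally show ?thesis
      using pos by (simp add: field_simps)
  qed
qed

section \<open>Well-conditioned symmetric matrices and their inverses\<close>

locale spectral_bounds =
  fixes p :: nat and A :: "nat \<Rightarrow> nat \<Rightarrow> real" and lo hi :: real
  assumes sym: "\<forall>a<p. \<forall>b<p. A a b = A b a"
    and lo_pos: "0 < lo" and lo_le_hi: "lo \<le> hi"
    and eigen_bounds: "\<And>lam. is_eigen p A lam \<Longrightarrow> lo \<le> lam \<and> lam \<le> hi"
begin

lemma bform_lower: "lo * sumsq p x \<le> bform p A x x"
  using sym eigen_bounds by (intro rayleigh_lower) auto

lemma bform_upper: "bform p A x x \<le> hi * sumsq p x"
  using sym eigen_bounds by (intro rayleigh_upper) auto

lemma bform_nonneg: "0 \<le> bform p A x x"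
  using bform_lower[of x] lo_pos sumsq_nonneg[of p x] by (meson mult_nonneg_nonneg less_imp_le order_trans)

lemma sumsq_mvec_le: "sumsq p (mvec p A y) \<le> hi * bform p A y y"
proof -
  let ?w = "mvec p A y"
  have hi: "0 \<le> hi" using lo_pos lo_le_hi by simp
  have "bform p A ?w y = sumsq p ?w"
    unfolding bform_mvec sumsq_def by (simp add: power2_eq_square)
  then have "(sumsq p ?w)\<^sup>2 \<le> bform p A ?w ?w * bform p A y y"
    using bform_cauchy_schwarz[where u = ?w and v = y, OF bform_commute[OF sym] bform_nonneg] by simp
  also have "\<dots> \<le> hi * sumsq p ?w * bform p A y y"
    using bform_upper[of ?w] bform_nonneg[of y] by (simp add: mult_right_mono)
  finally have "sumsq p ?w * sumsq p ?w \<le> sumsq p ?w * (hi * bform p A y y)"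
    by (simp add: power2_eq_square algebra_simps)
  then show ?thesis
    using hi bform_nonneg[of y] sumsq_nonneg[of p ?w]
    by (cases "sumsq p ?w = 0") simp_all
qed

lemma diag_ge: "j < p \<Longrightarrow> lo \<le> A j j"
  using bform_lower[of "\<lambda>i. of_bool (i = j)"] by (simp add: bform_unit sumsq_unit)

lemma column_sumsq_le:
  assumes "j < p"
  shows "(\<Sum>a<p. (A a j)\<^sup>2) \<le> hi\<^sup>2"
proof -
  let ?e = "\<lambda>i. of_bool (i = j)"
  have "(\<Sum>a<p. (A a j)\<^sup>2) = sumsq p (mvec p A ?e)"
    using assms by (simp add: sumsq_def mvec_unit)
  also have "\<dots> \<le> hi * bform p A ?e ?e"
    by (rule sumsq_mvec_le)
  also have "\<dots> \<le> hi * hi"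
    using bform_upper[of ?e] assms lo_pos lo_le_hi by (simp add: sumsq_unit)
  finally show ?thesis by (simp add: power2_eq_square)
qed

end

locale spectral_inverse = spectral_bounds +
  fixes S :: "nat \<Rightarrow> nat \<Rightarrow> real"
  assumes left_inverse: "\<forall>a<p. \<forall>b<p. (\<Sum>c<p. S a c * A c b) = of_bool (a = b)"
begin

definition preimage :: "(nat \<Rightarrow> real) \<Rightarrow> nat \<Rightarrow> real"
  where "preimage u b = (\<Sum>a<p. u a * S a b)"

lemma mvec_preimage: "b < p \<Longrightarrow> mvec p A (preimage u) b = u b"
proof -
  assume b: "b < p"
  have "mvec p A (preimage u) b = (\<Sum>c<p. \<Sum>a<p. u a * (S a c * A c b))"
    unfolding mvec_def preimage_def sum_distrib_left
    using sym b by (intro sum.cong refl) (simp add: algebra_simps)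
  also have "\<dots> = (\<Sum>a<p. u a * (\<Sum>c<p. S a c * A c b))"
    by (subst sum.swap) (simp add: sum_distrib_left)
  also have "\<dots> = u b"
    using left_inverse b by simp
  finally show ?thesis .
qed

lemma bform_inverse: "bform p S u v = bform p A (preimage u) (preimage v)"
proof -
  have "bform p S u v = (\<Sum>b<p. preimage u b * v b)"
    unfolding bform_def preimage_def by (subst sum.swap) (simp add: sum_distrib_right)
  also have "\<dots> = bform p A (preimage u) (preimage v)"
    unfolding bform_mvec by (rule sum.cong) (simp_all add: mvec_preimage)
  finally show ?thesis .
qed

lemma inverse_bform_commute: "bform p S u v = bform p S v u"
  unfolding bform_inverse by (rule bform_commute[OF sym])

lemma sumsq_le_inverse_bform: "sumsq p x \<le> hi * bform p S x x"
proof -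
  have "sumsq p x = sumsq p (mvec p A (preimage x))"
    by (rule sumsq_cong) (simp add: mvec_preimage)
  also have "\<dots> \<le> hi * bform p S x x"
    unfolding bform_inverse by (rule sumsq_mvec_le)
  finally show ?thesis .
qed

lemma inverse_bform_le_sumsq: "lo * bform p S x x \<le> sumsq p x"
proof -
  let ?y = "preimage x"
  have form: "bform p A ?y ?y = (\<Sum>a<p. ?y a * x a)"
    unfolding bform_mvec by (rule sum.cong) (simp_all add: mvec_preimage)
  text \<open>Young's inequality \<open>2 y x \<le> lo y\<^sup>2 + x\<^sup>2 / lo\<close>, coordinatewise.\<close>
  have "2 * lo * (?y a * x a) \<le> lo\<^sup>2 * (?y a)\<^sup>2 + (x a)\<^sup>2" for a
    using sum_squares_ge_zero[of "lo * ?y a - x a" 0] by (simp add: power2_eq_square algebra_simps)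
  then have "(\<Sum>a<p. 2 * lo * (?y a * x a)) \<le> (\<Sum>a<p. lo\<^sup>2 * (?y a)\<^sup>2 + (x a)\<^sup>2)"
    by (rule sum_mono)
  then have "2 * lo * bform p A ?y ?y \<le> lo\<^sup>2 * sumsq p ?y + sumsq p x"
    unfolding form sumsq_def by (simp add: sum_distrib_left sum.distrib)
  moreover have "lo\<^sup>2 * sumsq p ?y \<le> lo * bform p A ?y ?y"
    using bform_lower[of ?y] lo_pos by (simp add: power2_eq_square mult.assoc mult_left_mono)
  ultimately show ?thesis
    unfolding bform_inverse using lo_pos by (simp add: algebra_simps)
qed

end

section \<open>Perturbation of a weighted least-squares fit\<close>

lemma bform_young:
  assumes sym: "bform p M v u = bform p M u v" and psd: "\<And>y. 0 \<le> bform p M y y" and t: "0 < t"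
  shows "2 * bform p M u v \<le> t * bform p M u u + bform p M v v / t"
proof -
  have "0 \<le> bform p M v v - 2 * t * bform p M v u + t\<^sup>2 * bform p M u u"
    using psd[of "\<lambda>i. v i - t * u i"] bform_diff_scaled[where u = v and v = u] sym by simp
  then have "t * (2 * bform p M u v) \<le> t * (t * bform p M u u + bform p M v v / t)"
    using sym t by (simp add: power2_eq_square algebra_simps)
  with t show ?thesis by simp
qed

lemma weighted_error_form_le_cross:
  fixes S :: "nat \<Rightarrow> nat \<Rightarrow> nat \<Rightarrow> real" and e :: "nat \<Rightarrow> nat \<Rightarrow> real"
  assumes fin: "finite K" and LK: "L \<subseteq> K"
    and sym: "\<And>k u v. k \<in> K \<Longrightarrow> bform p (S k) u v = bform p (S k) v u"
    and e_L: "\<And>k i. k \<in> L \<Longrightarrow> i < p \<Longrightarrow> e k i = 0"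
    and opt: "(\<Sum>k\<in>K. w k * bform p (S k) (\<lambda>i. e k i - d i) (\<lambda>i. e k i - d i))
              \<le> (\<Sum>k\<in>K. w k * bform p (S k) (e k) (e k))"
  shows "(\<Sum>k\<in>K. w k * bform p (S k) d d) \<le> (\<Sum>k\<in>K - L. w k * (2 * bform p (S k) (e k) d))"
proof -
  have "w k * bform p (S k) (\<lambda>i. e k i - d i) (\<lambda>i. e k i - d i)
      = w k * bform p (S k) (e k) (e k) - w k * (2 * bform p (S k) (e k) d) + w k * bform p (S k) d d"
    if "k \<in> K" for k
  proof -
    have expand: "bform p (S k) (\<lambda>i. e k i - d i) (\<lambda>i. e k i - d i)
        = bform p (S k) (e k) (e k) - 2 * bform p (S k) (e k) d + bform p (S k) d d"
      using bform_diff_scaled[where p = p and M = "S k" and u = "e k" and v = d and t = 1, OF sym[OF that]]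
      by simp
    show ?thesis unfolding expand by (simp add: algebra_simps)
  qed
  then have "(\<Sum>k\<in>K. w k * bform p (S k) (\<lambda>i. e k i - d i) (\<lambda>i. e k i - d i))
      = (\<Sum>k\<in>K. w k * bform p (S k) (e k) (e k)) - (\<Sum>k\<in>K. w k * (2 * bform p (S k) (e k) d))
        + (\<Sum>k\<in>K. w k * bform p (S k) d d)"
    by (simp add: sum.distrib sum_subtractf)
  with opt have "(\<Sum>k\<in>K. w k * bform p (S k) d d) \<le> (\<Sum>k\<in>K. w k * (2 * bform p (S k) (e k) d))"
    by linarith
  also have "\<dots> = (\<Sum>k\<in>K - L. w k * (2 * bform p (S k) (e k) d))"
  proof -
    have "bform p (S k) (e k) d = 0" if "k \<in> L" for k
      using e_L that by (intro bform_zero_left) auto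
    then show ?thesis
      using sum.subset_diff[OF LK fin, of "\<lambda>k. w k * (2 * bform p (S k) (e k) d)"] by simp
  qed
  finally show ?thesis .
qed

lemma absorb_young_bound:
  fixes c R b E X :: real
  assumes "0 < c" "0 \<le> R" "0 < b" "0 \<le> X"
    and young: "\<And>t. 0 < t \<Longrightarrow> c * X \<le> R * (t * (b * E) + b * X / t)"
  shows "X \<le> 4 * b\<^sup>2 * E * R\<^sup>2 / c\<^sup>2"
proof (cases "R = 0")
  case True
  with young[of 1] assms(1,4) show ?thesis
    by (simp add: mult_le_0_iff)
next
  case False
  with assms(2) have R: "0 < R" by simp
  define t where "t = 2 * b * R / c"
  have "0 < t" unfolding t_def using R assms(1,3) by simp
  then have "c * X \<le> R * (t * (b * E) + b * X / t)" by (rule young)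
  also have "\<dots> = 2 * b\<^sup>2 * R\<^sup>2 * E / c + c * X / 2"
    unfolding t_def using R assms(1,3) by (simp add: field_simps power2_eq_square)
  finally show ?thesis
    using assms(1) by (simp add: field_simps power2_eq_square)
qed

text \<open>\<open>d\<close> is the error of a candidate against a reference point whose residuals are \<open>e k\<close>;
  \<open>opt\<close> says that the candidate fits at least as well as the reference.\<close>

lemma weighted_minimizer_bound:
  fixes S :: "nat \<Rightarrow> nat \<Rightarrow> nat \<Rightarrow> real" and e :: "nat \<Rightarrow> nat \<Rightarrow> real"
  assumes fin: "finite K" and LK: "L \<subseteq> K" and w_nonneg: "\<And>k. k \<in> K \<Longrightarrow> 0 \<le> w k"
    and W_pos: "0 < (\<Sum>k\<in>L. w k)"
    and sym: "\<And>k u v. k \<in> K \<Longrightarrow> bform p (S k) u v = bform p (S k) v u"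
    and psd: "\<And>k x. k \<in> K \<Longrightarrow> 0 \<le> bform p (S k) x x"
    and a: "0 < a" and b: "0 < b" and lower: "\<And>k x. k \<in> L \<Longrightarrow> a * sumsq p x \<le> bform p (S k) x x"
    and upper: "\<And>k x. k \<in> K \<Longrightarrow> bform p (S k) x x \<le> b * sumsq p x"
    and e_L: "\<And>k i. k \<in> L \<Longrightarrow> i < p \<Longrightarrow> e k i = 0"
    and e_bound: "\<And>k. k \<in> K - L \<Longrightarrow> sumsq p (e k) \<le> E"
    and opt: "(\<Sum>k\<in>K. w k * bform p (S k) (\<lambda>i. e k i - d i) (\<lambda>i. e k i - d i))
              \<le> (\<Sum>k\<in>K. w k * bform p (S k) (e k) (e k))"
  shows "sumsq p d \<le> 4 * b\<^sup>2 * E * (\<Sum>k\<in>K - L. w k)\<^sup>2 / ((\<Sum>k\<in>L. w k) * a)\<^sup>2"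
proof (rule absorb_young_bound)
  let ?W = "\<Sum>k\<in>L. w k" and ?R = "\<Sum>k\<in>K - L. w k"
  show "0 < ?W * a" "0 \<le> ?R" "0 < b" "0 \<le> sumsq p d"
    using W_pos a b w_nonneg by (auto intro: sum_nonneg sumsq_nonneg)
  fix t :: real assume t: "0 < t"
  have "?W * a * sumsq p d \<le> (\<Sum>k\<in>L. w k * bform p (S k) d d)"
    unfolding sum_distrib_right
    using lower w_nonneg LK by (intro sum_mono) (metis mult.assoc mult_left_mono subsetD)
  also have "\<dots> \<le> (\<Sum>k\<in>K. w k * bform p (S k) d d)"
    using w_nonneg psd LK by (intro sum_mono2 fin) (auto intro: mult_nonneg_nonneg)
  also have "\<dots> \<le> (\<Sum>k\<in>K - L. w k * (2 * bform p (S k) (e k) d))"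
    by (rule weighted_error_form_le_cross[OF fin LK sym e_L opt])
  also have "\<dots> \<le> (\<Sum>k\<in>K - L. w k * (t * (b * E) + b * sumsq p d / t))"
  proof (intro sum_mono mult_left_mono)
    fix k assume k: "k \<in> K - L"
    have "2 * bform p (S k) (e k) d \<le> t * bform p (S k) (e k) (e k) + bform p (S k) d d / t"
      using k sym psd t by (intro bform_young) auto
    also have "\<dots> \<le> t * (b * E) + b * sumsq p d / t"
      using k t b upper[of k "e k"] upper[of k d] e_bound[of k]
      by (intro add_mono mult_left_mono divide_right_mono) (auto intro: order_trans mult_left_mono)
    finally show "2 * bform p (S k) (e k) d \<le> t * (b * E) + b * sumsq p d / t" .
  qed (use w_nonneg in auto)
  finally show "?W * a * sumsq p d \<le> ?R * (t * (b * E) + b * sumsq p d / t)"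
    by (simp add: sum_distrib_right)
qed

section \<open>Covariance matrices, kernel weights and the oracle estimator\<close>

abbreviation entries :: "'a mat \<Rightarrow> nat \<Rightarrow> nat \<Rightarrow> 'a"
  where "entries A \<equiv> \<lambda>a b. A $$ (a, b)"

lemma eigenvalue_if_is_eigen:
  assumes A: "A \<in> carrier_mat p p" and "is_eigen p (entries A) lam"
  shows "eigenvalue A lam"
proof -
  from assms obtain x where nz: "\<exists>a<p. x a \<noteq> 0" and ev: "\<forall>a<p. mvec p (entries A) x a = lam * x a"
    by (auto simp: is_eigen_def)
  have "vec p x \<noteq> 0\<^sub>v p"
    using nz by (metis index_vec index_zero_vec(1))
  moreover have "A *\<^sub>v vec p x = lam \<cdot>\<^sub>v vec p x"
    using A ev by (intro eq_vecI) (auto simp: mvec_def scalar_prod_def lessThan_atLeast0)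
  ultimately show ?thesis
    using A unfolding eigenvalue_def eigenvector_def by (intro exI[of _ "vec p x"]) simp
qed

lemma spectral_inverse_mat:
  assumes Om: "Om \<in> carrier_mat p p" "Om = transpose_mat Om"
    and ev: "\<And>ev. eigenvalue Om ev \<Longrightarrow> lo \<le> ev \<and> ev \<le> hi" and "0 < lo" "lo \<le> hi"
    and Sig: "Sig \<in> carrier_mat p p" "Sig * Om = 1\<^sub>m p"
  shows "spectral_inverse p (entries Om) lo hi (entries Sig)"
proof
  show "\<forall>a<p. \<forall>b<p. Om $$ (a, b) = Om $$ (b, a)"
    using Om by (metis carrier_matD index_transpose_mat(1))
  show "\<forall>a<p. \<forall>b<p. (\<Sum>c<p. Sig $$ (a, c) * Om $$ (c, b)) = of_bool (a = b)"
  proof (intro allI impI)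
    fix a b assume "a < p" "b < p"
    then have "(Sig * Om) $$ (a, b) = (\<Sum>c<p. Sig $$ (a, c) * Om $$ (c, b))"
      using Om(1) Sig(1) by (simp add: scalar_prod_def lessThan_atLeast0)
    with Sig \<open>a < p\<close> \<open>b < p\<close> show "(\<Sum>c<p. Sig $$ (a, c) * Om $$ (c, b)) = of_bool (a = b)"
      by (simp split: if_splits)
  qed
qed (use assms eigenvalue_if_is_eigen in auto)

lemma sum_drop_vanishing_index:
  "h j = 0 \<Longrightarrow> (\<Sum>a\<in>{i. i < (p::nat) \<and> i \<noteq> j}. h a) = (\<Sum>a<p. h a)"
  by (rule sum.mono_neutral_left) auto

lemma quad_mj_eq_bform: "d j = 0 \<Longrightarrow> quad_mj p j M d = bform p (entries M) d d"
  unfolding quad_mj_def bform_def by (simp add: sum_drop_vanishing_index)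

lemma sqnorm_eq_sumsq: "d j = 0 \<Longrightarrow> sqnorm p j d = sumsq p d"
  unfolding sqnorm_def sumsq_def by (simp add: sum_drop_vanishing_index)

lemma beta_star_at_index: "beta_star p j Om j = 0"
  by (simp add: beta_star_def)

lemma l0_eq_0_vanishes: "l0 p j b = 0 \<Longrightarrow> i < p \<Longrightarrow> i \<noteq> j \<Longrightarrow> b i = 0"
  unfolding l0_def by (auto simp: finite_subset[of _ "{..<p}"])

lemma sumsq_beta_star_le:
  assumes "spectral_bounds p (entries Om) lo hi" and "j < p"
  shows "sumsq p (beta_star p j Om) \<le> hi\<^sup>2 / lo\<^sup>2"
proof -
  interpret spectral_bounds p "entries Om" lo hi by fact
  have diag: "lo \<le> Om $$ (j, j)"
    using diag_ge[OF \<open>j < p\<close>] by simp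
  have "sumsq p (beta_star p j Om) \<le> (\<Sum>a<p. (Om $$ (a, j))\<^sup>2 / (Om $$ (j, j))\<^sup>2)"
    unfolding sumsq_def beta_star_def by (rule sum_mono) (simp add: power_divide)
  also have "\<dots> = (\<Sum>a<p. (Om $$ (a, j))\<^sup>2) / (Om $$ (j, j))\<^sup>2"
    by (simp add: sum_divide_distrib)
  also have "\<dots> \<le> hi\<^sup>2 / (Om $$ (j, j))\<^sup>2"
    using column_sumsq_le[OF \<open>j < p\<close>] by (simp add: divide_right_mono)
  also have "\<dots> \<le> hi\<^sup>2 / lo\<^sup>2"
    using diag lo_pos by (intro divide_left_mono) (auto intro: power_mono)
  finally show ?thesis .
qed

lemma wgt_same_level: "z k = z l \<Longrightarrow> wgt cw z tau l k = cw l / tau"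
  by (simp add: wgt_def)

lemma wgt_other_level_le:
  assumes "0 < tau" "0 \<le> cw l" "0 \<le> dl" "dl \<le> \<bar>z k - z l\<bar>"
  shows "wgt cw z tau l k \<le> cw l / tau * exp (- (dl / tau)\<^sup>2)"
proof -
  have "dl\<^sup>2 \<le> (z k - z l)\<^sup>2"
    using assms(3,4) by (metis abs_le_square_iff abs_of_nonneg)
  then have "(dl / tau)\<^sup>2 \<le> ((z k - z l) / tau)\<^sup>2"
    using assms(1) by (simp add: power_divide divide_right_mono)
  then show ?thesis
    using assms(1,2) by (simp add: wgt_def mult_left_mono divide_right_mono)
qed

lemma delta_le: "k < n \<Longrightarrow> z k \<noteq> z l \<Longrightarrow> delta n z l \<le> \<bar>z k - z l\<bar>"
  unfolding delta_def by (rule Min_le) auto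

lemma obj_eq_bform_sum:
  assumes "b j = 0"
  shows "obj n p z Om Sig cw tau j l b
    = (\<Sum>k<n. wgt cw z tau l k * bform p (entries (Sig (z k)))
         (\<lambda>i. beta_star p j (Om (z k)) i - b i) (\<lambda>i. beta_star p j (Om (z k)) i - b i))"
  unfolding obj_def using assms by (simp add: quad_mj_eq_bform beta_star_at_index)

lemma nlev_pos: "l < n \<Longrightarrow> 0 < nlev n z l"
  unfolding nlev_def by (auto simp: card_gt_0_iff)

lemma sum_wgt_same_level:
  "(\<Sum>k\<in>{k. k < n \<and> z k = z l}. wgt cw z tau l k) = nlev n z l * (cw l / tau)"
  by (simp add: wgt_same_level nlev_def)

lemma sum_wgt_other_levels_le:
  fixes n l :: nat and z :: "nat \<Rightarrow> real"
  defines "L \<equiv> {k. k < n \<and> z k = z l}"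
  assumes tau: "0 < tau" and cw: "0 \<le> cw l" and delta: "0 \<le> delta n z l"
  shows "(\<Sum>k\<in>{..<n} - L. wgt cw z tau l k)
           \<le> (n - nlev n z l) * (cw l / tau * exp (- (delta n z l / tau)\<^sup>2))"
proof -
  have "wgt cw z tau l k \<le> cw l / tau * exp (- (delta n z l / tau)\<^sup>2)" if "k \<in> {..<n} - L" for k
    using that tau cw delta by (intro wgt_other_level_le delta_le) (auto simp: L_def)
  then have "(\<Sum>k\<in>{..<n} - L. wgt cw z tau l k)
           \<le> card ({..<n} - L) * (cw l / tau * exp (- (delta n z l / tau)\<^sup>2))"
    by (rule sum_bounded_above)
  also have "card ({..<n} - L) = n - nlev n z l"
    by (simp add: card_Diff_subset L_def nlev_def subset_iff)
  finally show ?thesis .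
qed

lemma exp_level_factor:
  assumes "0 < m" "m < n"
  shows "exp (- 2 * dl\<^sup>2 / tau\<^sup>2 + 2 * ln (real n / real m - 1))
       = (exp (- (dl / tau)\<^sup>2) * ((real n - real m) / real m))\<^sup>2"
proof -
  have q: "real n / real m - 1 = (real n - real m) / real m" "0 < (real n - real m) / real m"
    using assms by (simp_all add: field_simps)
  have "- 2 * dl\<^sup>2 / tau\<^sup>2 + 2 * ln (real n / real m - 1)
      = 2 * (- (dl / tau)\<^sup>2 + ln ((real n - real m) / real m))"
    by (simp add: q(1) power_divide algebra_simps)
  then show ?thesis
    using q(2) by (simp only: exp_double exp_add exp_ln)
qed

lemma minimizer_error_weight_ratio:
  fixes n l :: nat and z :: "nat \<Rightarrow> real"
  defines "L \<equiv> {k. k < n \<and> z k = z l}"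
  assumes levels: "\<And>k. k < n \<Longrightarrow> spectral_inverse p (entries (Om (z k))) lmin lmax (entries (Sig (z k)))"
    and cw: "0 < cw l" and tau: "0 < tau"
    and j: "j < p" and l: "l < n" and bt: "bt j = 0"
    and opt: "obj n p z Om Sig cw tau j l bt \<le> obj n p z Om Sig cw tau j l (beta_star p j (Om (z l)))"
  shows "sumsq p (\<lambda>i. bt i - beta_star p j (Om (z l)) i)
    \<le> 16 * lmax ^ 4 / lmin ^ 4
       * ((\<Sum>k\<in>{..<n} - L. wgt cw z tau l k) / (\<Sum>k\<in>L. wgt cw z tau l k))\<^sup>2"
proof -
  define beta where "beta k = beta_star p j (Om (z k))" for k
  define S where "S k = entries (Sig (z k))" for k
  define w where "w = wgt cw z tau l"
  have level: "sumsq p x \<le> lmax * bform p (S k) x x \<and> lmin * bform p (S k) x x \<le> sumsq p x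
      \<and> bform p (S k) u v = bform p (S k) v u \<and> sumsq p (beta k) \<le> lmax\<^sup>2 / lmin\<^sup>2"
    if "k < n" for k x u v
  proof -
    interpret spectral_inverse p "entries (Om (z k))" lmin lmax "entries (Sig (z k))"
      using levels[OF that] .
    show ?thesis
      using sumsq_le_inverse_bform inverse_bform_le_sumsq inverse_bform_commute
        sumsq_beta_star_le[OF spectral_inverse.axioms(1)[OF levels[OF that]] j]
      by (simp add: S_def beta_def)
  qed
  have lmin: "0 < lmin" and lmax: "lmin \<le> lmax"
    using levels[OF l] by (simp_all add: spectral_inverse_def spectral_bounds_def)
  have W_pos: "0 < (\<Sum>k\<in>L. w k)"
    using nlev_pos[OF l] cw tau by (simp add: L_def w_def sum_wgt_same_level)
  have "sumsq p (\<lambda>i. bt i - beta l i)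
      \<le> 4 * (1 / lmin)\<^sup>2 * (4 * lmax\<^sup>2 / lmin\<^sup>2) * (\<Sum>k\<in>{..<n} - L. w k)\<^sup>2 / ((\<Sum>k\<in>L. w k) * (1 / lmax))\<^sup>2"
  proof (rule weighted_minimizer_bound[where S = S and e = "\<lambda>k i. beta k i - beta l i"])
    show "L \<subseteq> {..<n}" by (auto simp: L_def)
    show "0 \<le> w k" for k
      using cw tau by (simp add: w_def wgt_def)
    show "0 < 1 / lmax" "0 < 1 / lmin"
      using lmin lmax by simp_all
    show "bform p (S k) u v = bform p (S k) v u" if "k \<in> {..<n}" for k u v
      using level that by blast
    show "0 \<le> bform p (S k) x x" if "k \<in> {..<n}" for k x
    proof -
      have "0 \<le> lmax * bform p (S k) x x"
        using level[of k x x x] that sumsq_nonneg[of p x] by auto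
      with lmin lmax show ?thesis by (simp add: zero_le_mult_iff)
    qed
    show "1 / lmax * sumsq p x \<le> bform p (S k) x x" if "k \<in> L" for k x
      using level[of k x] that lmin lmax by (auto simp: L_def field_simps)
    show "bform p (S k) x x \<le> 1 / lmin * sumsq p x" if "k \<in> {..<n}" for k x
      using level[of k x] that lmin by (auto simp: field_simps)
    show "beta k i - beta l i = 0" if "k \<in> L" for k i
      using that by (simp add: L_def beta_def)
    show "sumsq p (\<lambda>i. beta k i - beta l i) \<le> 4 * lmax\<^sup>2 / lmin\<^sup>2" if "k \<in> {..<n} - L" for k
      using sumsq_diff_le[of p "beta k" "beta l"] level[of k] level[of l] that l by fastforce
    show "(\<Sum>k\<in>{..<n}. w k * bform p (S k) (\<lambda>i. beta k i - beta l i - (bt i - beta l i))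
                                            (\<lambda>i. beta k i - beta l i - (bt i - beta l i)))
        \<le> (\<Sum>k\<in>{..<n}. w k * bform p (S k) (\<lambda>i. beta k i - beta l i) (\<lambda>i. beta k i - beta l i))"
      using opt bt by (simp add: obj_eq_bform_sum beta_star_at_index beta_def S_def w_def lessThan_def)
  qed (use W_pos in simp_all)
  also have "\<dots> = 16 * lmax ^ 4 / lmin ^ 4 * ((\<Sum>k\<in>{..<n} - L. w k) / (\<Sum>k\<in>L. w k))\<^sup>2"
    using lmin W_pos by (simp add: field_simps power2_eq_square power4_eq_xxxx)
  finally show ?thesis
    by (simp add: beta_def w_def)
qed

lemma minimizer_error_bound:
  fixes n l :: nat and z :: "nat \<Rightarrow> real"
  assumes levels: "\<And>k. k < n \<Longrightarrow> spectral_inverse p (entries (Om (z k))) lmin lmax (entries (Sig (z k)))"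
    and cw: "0 < cw l" and tau: "0 < tau" and delta: "0 \<le> delta n z l"
    and j: "j < p" and l: "l < n" and other_levels: "nlev n z l < n" and bt: "bt j = 0"
    and opt: "obj n p z Om Sig cw tau j l bt \<le> obj n p z Om Sig cw tau j l (beta_star p j (Om (z l)))"
  shows "sqnorm p j (\<lambda>i. bt i - beta_star p j (Om (z l)) i)
    \<le> 16 * lmax ^ 4 / lmin ^ 4
       * exp (- 2 * (delta n z l)\<^sup>2 / tau\<^sup>2 + 2 * ln (real n / real (nlev n z l) - 1))"
proof -
  define L where "L = {k. k < n \<and> z k = z l}"
  define m where "m = nlev n z l"
  define eps where "eps = exp (- (delta n z l / tau)\<^sup>2)"
  have m: "0 < m" "m < n"
    using nlev_pos[OF l] other_levels by (simp_all add: m_def)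
  have W: "(\<Sum>k\<in>L. wgt cw z tau l k) = m * (cw l / tau)"
    unfolding L_def m_def by (rule sum_wgt_same_level)
  have R: "(\<Sum>k\<in>{..<n} - L. wgt cw z tau l k) \<le> (n - m) * (cw l / tau * eps)"
    unfolding L_def m_def eps_def using tau cw delta by (intro sum_wgt_other_levels_le) auto
  have R_nonneg: "0 \<le> (\<Sum>k\<in>{..<n} - L. wgt cw z tau l k)"
    using tau cw by (intro sum_nonneg) (simp add: wgt_def)
  have "(\<Sum>k\<in>{..<n} - L. wgt cw z tau l k) / (\<Sum>k\<in>L. wgt cw z tau l k)
      \<le> (n - m) * (cw l / tau * eps) / (m * (cw l / tau))"
    unfolding W using R m tau cw by (intro divide_right_mono) simp_all
  also have "\<dots> = eps * ((real n - real m) / real m)"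
    using m tau cw by (simp add: field_simps of_nat_diff)
  finally have ratio: "(\<Sum>k\<in>{..<n} - L. wgt cw z tau l k) / (\<Sum>k\<in>L. wgt cw z tau l k)
      \<le> eps * ((real n - real m) / real m)" .
  have "sqnorm p j (\<lambda>i. bt i - beta_star p j (Om (z l)) i) = sumsq p (\<lambda>i. bt i - beta_star p j (Om (z l)) i)"
    by (simp add: sqnorm_eq_sumsq bt beta_star_at_index)
  also have "\<dots> \<le> 16 * lmax ^ 4 / lmin ^ 4
       * ((\<Sum>k\<in>{..<n} - L. wgt cw z tau l k) / (\<Sum>k\<in>L. wgt cw z tau l k))\<^sup>2"
    unfolding L_def by (rule minimizer_error_weight_ratio[where cw = cw and l = l, OF levels cw tau j l bt opt])
  also have "\<dots> \<le> 16 * lmax ^ 4 / lmin ^ 4 * (eps * ((real n - real m) / real m))\<^sup>2"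
    using ratio R_nonneg m tau cw by (intro mult_left_mono power_mono) (simp_all add: W)
  also have "\<dots> = 16 * lmax ^ 4 / lmin ^ 4
       * exp (- 2 * (delta n z l)\<^sup>2 / tau\<^sup>2 + 2 * ln (real n / real (nlev n z l) - 1))"
    using exp_level_factor[OF m] by (simp add: eps_def m_def)
  finally show ?thesis .
qed

lemma tau_pos:
  assumes "0 < ctau" "0 < delta0" and sep: "\<forall>l<n. nlev n z l < n \<longrightarrow> delta0 \<le> delta n z l"
    and l: "l < n" "nlev n z l < n"
  shows "0 < ctau * Min {delta n z l | l. l < n \<and> nlev n z l < n} / sqrt (ln (real n))"
proof -
  have "finite {delta n z l | l. l < n \<and> nlev n z l < n}"
    by simp
  with sep l have "delta0 \<le> Min {delta n z l | l. l < n \<and> nlev n z l < n}"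
    by (subst Min_ge_iff) auto
  moreover have "1 < n"
    using nlev_pos[OF l(1), of z] l(2) by simp
  ultimately show ?thesis
    using assms(1,2) by simp
qed

lemma sparse_minimizer_error_bound:
  fixes n l :: nat and z :: "nat \<Rightarrow> real" and s :: nat
  assumes levels: "\<And>k. k < n \<Longrightarrow> spectral_inverse p (entries (Om (z k))) lmin lmax (entries (Sig (z k)))"
    and cw: "0 < cw l" and tau: "0 < tau" and delta: "0 \<le> delta n z l"
    and j: "j < p" and l: "l < n" and other_levels: "nlev n z l < n"
    and beta_sparse: "l0 p j (beta_star p j (Om (z l))) \<le> s" and C0: "1 \<le> C0"
    and bt_feasible: "in_Rpm1 p j bt" and bt_sparse: "real (l0 p j bt) \<le> C0 * real s"
    and bt_min: "\<And>b. in_Rpm1 p j b \<Longrightarrow> real (l0 p j b) \<le> C0 * real s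
                  \<Longrightarrow> obj n p z Om Sig cw tau j l bt \<le> obj n p z Om Sig cw tau j l b"
  shows "sqnorm p j (\<lambda>i. bt i - beta_star p j (Om (z l)) i)
    \<le> 16 * lmax ^ 4 / lmin ^ 4
       * exp (- 2 * (delta n z l)\<^sup>2 / tau\<^sup>2 + 2 * ln (real n / real (nlev n z l) - 1)) * real s"
proof (cases "s = 0")
  case True
  with bt_sparse beta_sparse have "l0 p j bt = 0" "l0 p j (beta_star p j (Om (z l))) = 0"
    by simp_all
  then have "sqnorm p j (\<lambda>i. bt i - beta_star p j (Om (z l)) i) = 0"
    unfolding sqnorm_def by (intro sum.neutral) (simp add: l0_eq_0_vanishes)
  with True show ?thesis by simp
next
  case False
  let ?bound = "16 * lmax ^ 4 / lmin ^ 4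
    * exp (- 2 * (delta n z l)\<^sup>2 / tau\<^sup>2 + 2 * ln (real n / real (nlev n z l) - 1))"
  have "real (l0 p j (beta_star p j (Om (z l)))) \<le> 1 * real s"
    using beta_sparse by simp
  also have "\<dots> \<le> C0 * real s"
    using C0 by (intro mult_right_mono) simp_all
  finally have "obj n p z Om Sig cw tau j l bt \<le> obj n p z Om Sig cw tau j l (beta_star p j (Om (z l)))"
    by (intro bt_min) (simp_all add: in_Rpm1_def beta_star_def)
  with bt_feasible have "sqnorm p j (\<lambda>i. bt i - beta_star p j (Om (z l)) i) \<le> ?bound"
    by (intro minimizer_error_bound[where z = z and Om = Om and Sig = Sig and cw = cw and l = l, OF levels cw tau delta j l
          other_levels]) (simp_all add: in_Rpm1_def)
  also have "?bound * 1 \<le> ?bound * real s"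
    using False by (intro mult_left_mono) simp_all
  finally show ?thesis by simp
qed

theorem lemma2:
  fixes lmin lmax delta0 ctau C0 :: real
  assumes "0 < lmin" and "lmin \<le> lmax" and "0 < delta0" and "0 < ctau" and "ctau < 1"
    and "1 \<le> C0"
  shows "\<exists>c>0. \<forall>(n::nat) (p::nat) (z::nat \<Rightarrow> real) (Om::real \<Rightarrow> real mat) (Sig::real \<Rightarrow> real mat)
      (s::nat \<Rightarrow> nat) (cw::nat \<Rightarrow> real) (tau::real).
    (\<forall>i<n. Om (z i) \<in> carrier_mat p p \<and> Om (z i) = transpose_mat (Om (z i))
        \<and> (\<forall>ev. eigenvalue (Om (z i)) ev \<longrightarrow> lmin \<le> ev \<and> ev \<le> lmax)
        \<and> Sig (z i) \<in> carrier_mat p p \<and> Sig (z i) * Om (z i) = 1\<^sub>m p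
        \<and> (\<forall>j<p. l0 p j (beta_star p j (Om (z i))) \<le> s j))
    \<and> (\<forall>l<n. nlev n z l < n \<longrightarrow> delta0 \<le> delta n z l)
    \<and> (\<forall>l<n. 0 < cw l)
    \<and> tau = ctau * Min {delta n z l | l. l < n \<and> nlev n z l < n} / sqrt (ln (real n))
    \<longrightarrow> (\<forall>j<p. \<forall>l<n. nlev n z l < n \<longrightarrow>
          (\<forall>bt. in_Rpm1 p j bt \<and> real (l0 p j bt) \<le> C0 * real (s j)
             \<and> (\<forall>b. in_Rpm1 p j b \<and> real (l0 p j b) \<le> C0 * real (s j) \<longrightarrow>
                   obj n p z Om Sig cw tau j l bt \<le> obj n p z Om Sig cw tau j l b)
           \<longrightarrow> sqnorm p j (\<lambda>i. bt i - beta_star p j (Om (z l)) i)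
               \<le> c * exp (- 2 * (delta n z l)\<^sup>2 / tau\<^sup>2
                          + 2 * ln (real n / real (nlev n z l) - 1)) * real (s j)))"
  apply (intro exI[of _ "16 * lmax ^ 4 / lmin ^ 4"] conjI allI impI)
  subgoal using assms(1,2) by simp
  subgoal premises prems for n p z Om Sig s cw tau j l bt
  proof -
    note spec = prems(1)[THEN conjunct1]
      and sep = prems(1)[THEN conjunct2, THEN conjunct1]
      and cw = prems(1)[THEN conjunct2, THEN conjunct2, THEN conjunct1]
      and tau_def = prems(1)[THEN conjunct2, THEN conjunct2, THEN conjunct2]
      and j = prems(2) and l = prems(3) and other_levels = prems(4) and bt = prems(5)
    have levels: "spectral_inverse p (entries (Om (z k))) lmin lmax (entries (Sig (z k)))" if "k < n" for k
      using spec[rule_format, OF that] by (intro spectral_inverse_mat[OF _ _ _ assms(1,2)]) auto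
    have tau: "0 < tau"
      unfolding tau_def by (rule tau_pos[OF assms(4,3) sep l other_levels])
    have "delta0 \<le> delta n z l"
      using sep l other_levels by blast
    with assms(3) have delta: "0 \<le> delta n z l" by simp
    have beta_sparse: "l0 p j (beta_star p j (Om (z l))) \<le> s j"
      using spec[rule_format, OF l] j by blast
    show ?thesis
      using bt by (intro sparse_minimizer_error_bound[where z = z and Om = Om and Sig = Sig and cw = cw and l = l,
          OF levels cw[rule_format, OF l] tau delta j l other_levels beta_sparse assms(6)]) simp_all
  qed
  done

end
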